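(* Let $(\Sigma_+,\Sigma_-,N_1,N_2,N_3)$ be a solution of the Wainwright–Hsu system satisfying the constraint, with $N_1=0$, $N_2>0$, $N_3<0$, and define for $i=1,2,3$ $$a_i(\tau)=\exp\Big(-\int_0^\tau(3\Sigma_i(s)+1)\,ds\Big),$$ where $\Sigma_1=-\frac23\Sigma_+$, $\Sigma_2=\frac13\Sigma_++\frac1{\sqrt3}\Sigma_-$, $\Sigma_3=\frac13\Sigma_+-\frac1{\sqrt3}\Sigma_-$. Then $a_i(\tau)\to0$ as $\tau\to\infty$ for $i=1,2,3$.
   Context: Wainwright–Hsu system: for functions $N_1,N_2,N_3,\Sigma_+,\Sigma_-$ of $\tau\in\mathbb{R}$ (prime denotes $d/d\tau$), $N_1'=(q-4\Sigma_+)N_1$, $N_2'=(q+2\Sigma_++2\sqrt3\Sigma_-)N_2$, $N_3'=(q+2\Sigma_+-2\sqrt3\Sigma_-)N_3$, $\Sigma_+'=-(2-q)\Sigma_+-3S_+$, $\Sigma_-'=-(2-q)\Sigma_--3S_-$, where $q=2(\Sigma_+^2+\Sigma_-^2)$, $S_+=\frac12[(N_2-N_3)^2-N_1(2N_1-N_2-N_3)]$, $S_-=\frac{\sqrt3}{2}(N_3-N_2)(N_1-N_2-N_3)$, together with the constraint $\Sigma_+^2+\Sigma_-^2+\frac34[N_1^2+N_2^2+N_3^2-2(N_1N_2+N_2N_3+N_1N_3)]=1$. (Geometrically, the spacetime metric is $-dt^2+\sum_i a_i^{-2}\xi^i\otimes\xi^i$ with $\xi^i$ a left-invariant coframe and $dt/d\tau=3/\theta$.)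 *)

theory Defs
  imports "HOL-Analysis.Analysis"
begin

definition wh_q :: "real \<Rightarrow> real \<Rightarrow> real" where
  "wh_q Sp Sm = 2 * (Sp\<^sup>2 + Sm\<^sup>2)"

definition wh_Sp :: "real \<Rightarrow> real \<Rightarrow> real \<Rightarrow> real" where
  "wh_Sp n1 n2 n3 = (1/2) * ((n2 - n3)\<^sup>2 - n1 * (2*n1 - n2 - n3))"

definition wh_Sm :: "real \<Rightarrow> real \<Rightarrow> real \<Rightarrow> real" where
  "wh_Sm n1 n2 n3 = (sqrt 3 / 2) * (n3 - n2) * (n1 - n2 - n3)"

definition WH_solution ::
  "(real \<Rightarrow> real) \<Rightarrow> (real \<Rightarrow> real) \<Rightarrow> (real \<Rightarrow> real) \<Rightarrow> (real \<Rightarrow> real) \<Rightarrow> (real \<Rightarrow> real) \<Rightarrow> bool"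
  where
  "WH_solution N1 N2 N3 Sp Sm \<longleftrightarrow>
     (\<forall>t. (N1 has_real_derivative (wh_q (Sp t) (Sm t) - 4 * Sp t) * N1 t) (at t)
        \<and> (N2 has_real_derivative (wh_q (Sp t) (Sm t) + 2 * Sp t + 2 * sqrt 3 * Sm t) * N2 t) (at t)
        \<and> (N3 has_real_derivative (wh_q (Sp t) (Sm t) + 2 * Sp t - 2 * sqrt 3 * Sm t) * N3 t) (at t)
        \<and> (Sp has_real_derivative
              (- (2 - wh_q (Sp t) (Sm t)) * Sp t - 3 * wh_Sp (N1 t) (N2 t) (N3 t))) (at t)
        \<and> (Sm has_real_derivative
              (- (2 - wh_q (Sp t) (Sm t)) * Sm t - 3 * wh_Sm (N1 t) (N2 t) (N3 t))) (at t)
        \<and> (Sp t)\<^sup>2 + (Sm t)\<^sup>2 + (3/4) * ((N1 t)\<^sup>2 + (N2 t)\<^sup>2 + (N3 t)\<^sup>2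
             - 2 * (N1 t * N2 t + N2 t * N3 t + N1 t * N3 t)) = 1)"

definition int0 :: "(real \<Rightarrow> real) \<Rightarrow> real \<Rightarrow> real" where
  "int0 f \<tau> = (if 0 \<le> \<tau> then integral {0..\<tau>} f else - integral {\<tau>..0} f)"

definition scale_factor :: "(real \<Rightarrow> real) \<Rightarrow> real \<Rightarrow> real" where
  "scale_factor Si \<tau> = exp (- int0 (\<lambda>s. 3 * Si s + 1) \<tau>)"

end

theory Submission
  imports Defs "HOL-Real_Asymp.Real_Asymp"
begin

(*
  With N1 = 0 the constraint reads Sigma_+^2 + Sigma_-^2 + 3/4 (N2 - N3)^2 = 1 and the Sigma_+
  equation becomes (1 + Sigma_+)' = -3/2 (N2 - N3)^2 (1 + Sigma_+).  Hence 1 + Sigma_+ > 0 and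
  (N2 - N3)^2 <= 8/3 (1 + Sigma_+), whence 1/(1 + Sigma_+) <= c + 4 tau with c = 1/(1 + Sigma_+(0)).

  Up to additive constants, -ln a2 = (ln N2 - ln (1 + Sigma_+))/2, -ln a3 is the same with -N3 in
  place of N2, and -ln a1 = 3 tau - (ln N2 + ln (-N3))/2 + ln (1 + Sigma_+).  In
  Z = ln N2 + ln (-N3) - 3/2 ln (1 + Sigma_+) the Sigma_- terms cancel and Z' >= 2 (1 + Sigma_+)
  >= 2/(c + 4 tau), so Z grows like (ln tau)/2; as ln (-N3) <= ln (N2 - N3) <= const + ln (1 + Sigma_+)/2,
  this drives -ln a2 to infinity.  The reflection N2 <-> -N3, Sigma_- <-> -Sigma_- is a symmetry of
  the system exchanging a2 and a3.  Finally N2 (-N3) <= (N2 - N3)^2/4 <= 2/3 (1 + Sigma_+) bounds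
  -ln a1 below by 3 tau - const - ln (c + 4 tau)/2.
*)

lemma DERIV_ln_of_rate:
  fixes f :: "real \<Rightarrow> real"
  assumes "(f has_real_derivative k * f t) (at t)" and "0 < f t"
  shows "((\<lambda>x. ln (f x)) has_real_derivative k) (at t)"
  using DERIV_chain2[OF DERIV_ln_divide[OF assms(2)] assms(1)] assms(2) by simp

lemma int0_eq_diff:
  fixes G g :: "real \<Rightarrow> real"
  assumes "\<And>t. (G has_real_derivative g t) (at t)" and "0 \<le> \<tau>"
  shows "int0 g \<tau> = G \<tau> - G 0"
proof -
  have "(g has_integral G \<tau> - G 0) {0..\<tau>}"
    using assms by (intro fundamental_theorem_of_calculus)
      (auto simp: has_real_derivative_iff_has_vector_derivative[symmetric] intro: has_field_derivative_at_within)
  then show ?thesis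
    using assms(2) unfolding int0_def by (simp add: integral_unique)
qed

lemma scale_factor_tendsto_0:
  fixes G S :: "real \<Rightarrow> real"
  assumes "\<And>t. (G has_real_derivative 3 * S t + 1) (at t)"
    and "filterlim G at_top at_top"
  shows "(scale_factor S \<longlongrightarrow> 0) at_top"
proof -
  have "filterlim (\<lambda>\<tau>. G \<tau> - G 0) at_top at_top"
    using filterlim_tendsto_add_at_top[OF tendsto_const[of "- G 0"] assms(2)] by simp
  then have "filterlim (\<lambda>\<tau>. - (G \<tau> - G 0)) at_bot at_top"
    by (simp add: filterlim_uminus_at_bot)
  then have "((\<lambda>\<tau>. exp (- (G \<tau> - G 0))) \<longlongrightarrow> 0) at_top"
    by (rule filterlim_compose[OF exp_at_bot])
  moreover have "\<forall>\<^sub>F \<tau> in at_top. exp (- (G \<tau> - G 0)) = scale_factor S \<tau>"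
    using eventually_ge_at_top[of 0]
    by eventually_elim (simp add: scale_factor_def int0_eq_diff[OF assms(1)])
  ultimately show ?thesis
    by (rule Lim_transform_eventually)
qed

lemma increment_le_of_DERIV_le:
  fixes f g f' g' :: "real \<Rightarrow> real"
  assumes "\<And>x. x \<in> {a..b} \<Longrightarrow> (f has_real_derivative f' x) (at x)"
    and "\<And>x. x \<in> {a..b} \<Longrightarrow> (g has_real_derivative g' x) (at x)"
    and "\<And>x. x \<in> {a..b} \<Longrightarrow> f' x \<le> g' x"
    and "a \<le> b"
  shows "f b - f a \<le> g b - g a"
proof -
  have "(\<lambda>x. g x - f x) a \<le> (\<lambda>x. g x - f x) b"
    by (rule deriv_nonneg_imp_mono[where g' = "\<lambda>x. g' x - f' x"])
      (use assms in \<open>auto intro: DERIV_diff\<close>)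
  then show ?thesis by simp
qed

lemma inverse_le_of_DERIV_ge:
  fixes f f' :: "real \<Rightarrow> real"
  assumes "\<And>x. (f has_real_derivative f' x) (at x)" and "\<And>x. 0 < f x"
    and "\<And>x. - c * (f x)\<^sup>2 \<le> f' x" and "0 \<le> t"
  shows "inverse (f t) \<le> inverse (f 0) + c * t"
proof -
  have "inverse (f t) - inverse (f 0) \<le> c * t - c * 0"
  proof (rule increment_le_of_DERIV_le[OF _ _ _ \<open>0 \<le> t\<close>])
    fix x
    show "((\<lambda>x. inverse (f x)) has_real_derivative - f' x / (f x)\<^sup>2) (at x)"
      by (rule DERIV_cong[OF DERIV_inverse_fun[OF assms(1)]])
        (use assms(2)[of x] in \<open>auto simp: divide_inverse power2_eq_square\<close>)
    show "((\<lambda>x. c * x) has_real_derivative c) (at x)"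
      using DERIV_cmult_Id .
    show "- f' x / (f x)\<^sup>2 \<le> c"
      using assms(2,3)[of x] by (simp add: field_simps)
  qed
  then show ?thesis by simp
qed

locale bianchi_VI0 =
  fixes N1 N2 N3 Sp Sm :: "real \<Rightarrow> real"
  assumes WH: "WH_solution N1 N2 N3 Sp Sm"
    and N1_zero: "\<And>t. N1 t = 0"
    and N2_pos: "\<And>t. 0 < N2 t"
    and N3_neg: "\<And>t. N3 t < 0"
begin

lemma constraint: "(Sp t)\<^sup>2 + (Sm t)\<^sup>2 + 3/4 * (N2 t - N3 t)\<^sup>2 = 1"
  using WH unfolding WH_solution_def by (simp add: N1_zero power2_diff)

lemma wh_q_eq: "wh_q (Sp t) (Sm t) = 2 - 3/2 * (N2 t - N3 t)\<^sup>2"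
  using constraint[of t] unfolding wh_q_def by (simp add: algebra_simps)

lemma one_plus_Sp_pos: "0 < 1 + Sp t"
proof -
  have "0 < (N2 t - N3 t)\<^sup>2"
    using N2_pos[of t] N3_neg[of t] by simp
  then have "(Sp t)\<^sup>2 < 1"
    using constraint[of t] zero_le_power2[of "Sm t"] by linarith
  then show ?thesis
    by (simp add: abs_square_less_1)
qed

lemma N2_minus_N3_sq_le: "3/4 * (N2 t - N3 t)\<^sup>2 \<le> 2 * (1 + Sp t)"
proof -
  have "3/4 * (N2 t - N3 t)\<^sup>2 \<le> 1 - (Sp t)\<^sup>2"
    using constraint[of t] zero_le_power2[of "Sm t"] by linarith
  also have "\<dots> = 2 * (1 + Sp t) - (1 + Sp t)\<^sup>2"
    by (simp add: power2_eq_square algebra_simps)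
  finally show ?thesis
    using zero_le_power2[of "1 + Sp t"] by linarith
qed

lemma N2_times_neg_N3_le: "N2 t * - N3 t \<le> 2/3 * (1 + Sp t)"
proof -
  have "N2 t * - N3 t = ((N2 t - N3 t)\<^sup>2 - (N2 t + N3 t)\<^sup>2) / 4"
    by (simp add: power2_eq_square algebra_simps)
  also have "\<dots> \<le> (N2 t - N3 t)\<^sup>2 / 4"
    by simp
  also have "\<dots> \<le> 2/3 * (1 + Sp t)"
    using N2_minus_N3_sq_le[of t] by simp
  finally show ?thesis .
qed

lemma DERIV_one_plus_Sp:
  "((\<lambda>t. 1 + Sp t) has_real_derivative - 3/2 * (N2 t - N3 t)\<^sup>2 * (1 + Sp t)) (at t)"
proof -
  have "(Sp has_real_derivative
      - (2 - wh_q (Sp t) (Sm t)) * Sp t - 3 * wh_Sp (N1 t) (N2 t) (N3 t)) (at t)"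
    using WH unfolding WH_solution_def by blast
  from DERIV_add[OF DERIV_const this] show ?thesis
    by (rule DERIV_cong) (simp add: wh_q_eq wh_Sp_def N1_zero algebra_simps)
qed

lemma DERIV_ln_N2:
  "((\<lambda>t. ln (N2 t)) has_real_derivative
     2 - 3/2 * (N2 t - N3 t)\<^sup>2 + 2 * Sp t + 2 * sqrt 3 * Sm t) (at t)"
proof -
  have "(N2 has_real_derivative (wh_q (Sp t) (Sm t) + 2 * Sp t + 2 * sqrt 3 * Sm t) * N2 t) (at t)"
    using WH unfolding WH_solution_def by blast
  from DERIV_ln_of_rate[OF this N2_pos] show ?thesis
    by (simp add: wh_q_eq)
qed

lemma DERIV_ln_one_plus_Sp:
  "((\<lambda>t. ln (1 + Sp t)) has_real_derivative - 3/2 * (N2 t - N3 t)\<^sup>2) (at t)"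
  by (rule DERIV_ln_of_rate[OF DERIV_one_plus_Sp one_plus_Sp_pos])

lemma bianchi_VI0_reflect: "bianchi_VI0 N1 (\<lambda>t. - N3 t) (\<lambda>t. - N2 t) Sp (\<lambda>t. - Sm t)"
proof
  show "WH_solution N1 (\<lambda>t. - N3 t) (\<lambda>t. - N2 t) Sp (\<lambda>t. - Sm t)"
    unfolding WH_solution_def
  proof
    fix t
    from WH have
      d1: "(N1 has_real_derivative (wh_q (Sp t) (Sm t) - 4 * Sp t) * N1 t) (at t)" and
      d2: "(N2 has_real_derivative (wh_q (Sp t) (Sm t) + 2 * Sp t + 2 * sqrt 3 * Sm t) * N2 t) (at t)" and
      d3: "(N3 has_real_derivative (wh_q (Sp t) (Sm t) + 2 * Sp t - 2 * sqrt 3 * Sm t) * N3 t) (at t)" and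
      dp: "(Sp has_real_derivative
              - (2 - wh_q (Sp t) (Sm t)) * Sp t - 3 * wh_Sp (N1 t) (N2 t) (N3 t)) (at t)" and
      dm: "(Sm has_real_derivative
              - (2 - wh_q (Sp t) (Sm t)) * Sm t - 3 * wh_Sm (N1 t) (N2 t) (N3 t)) (at t)"
      unfolding WH_solution_def by blast+
    have q: "wh_q (Sp t) (- Sm t) = wh_q (Sp t) (Sm t)"
      by (simp add: wh_q_def)
    have dm': "((\<lambda>t. - Sm t) has_real_derivative
        - (2 - wh_q (Sp t) (- Sm t)) * - Sm t - 3 * wh_Sm (N1 t) (- N3 t) (- N2 t)) (at t)"
      by (rule DERIV_cong[OF DERIV_minus[OF dm]]) (simp add: q N1_zero wh_Sm_def field_simps)
    show "(N1 has_real_derivative (wh_q (Sp t) (- Sm t) - 4 * Sp t) * N1 t) (at t)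
      \<and> ((\<lambda>t. - N3 t) has_real_derivative
           (wh_q (Sp t) (- Sm t) + 2 * Sp t + 2 * sqrt 3 * - Sm t) * - N3 t) (at t)
      \<and> ((\<lambda>t. - N2 t) has_real_derivative
           (wh_q (Sp t) (- Sm t) + 2 * Sp t - 2 * sqrt 3 * - Sm t) * - N2 t) (at t)
      \<and> (Sp has_real_derivative
           - (2 - wh_q (Sp t) (- Sm t)) * Sp t - 3 * wh_Sp (N1 t) (- N3 t) (- N2 t)) (at t)
      \<and> ((\<lambda>t. - Sm t) has_real_derivative
           - (2 - wh_q (Sp t) (- Sm t)) * - Sm t - 3 * wh_Sm (N1 t) (- N3 t) (- N2 t)) (at t)
      \<and> (Sp t)\<^sup>2 + (- Sm t)\<^sup>2 + 3/4 * ((N1 t)\<^sup>2 + (- N3 t)\<^sup>2 + (- N2 t)\<^sup>2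
           - 2 * (N1 t * - N3 t + - N3 t * - N2 t + N1 t * - N2 t)) = 1"
      using d1 DERIV_minus[OF d3] DERIV_minus[OF d2] dp dm' constraint[of t]
      by (simp add: q N1_zero wh_Sp_def wh_Sm_def power2_diff algebra_simps)
  qed
qed (use N1_zero N2_pos N3_neg in auto)

lemma DERIV_ln_neg_N3:
  "((\<lambda>t. ln (- N3 t)) has_real_derivative
     2 - 3/2 * (N2 t - N3 t)\<^sup>2 + 2 * Sp t - 2 * sqrt 3 * Sm t) (at t)"
  using bianchi_VI0.DERIV_ln_N2[OF bianchi_VI0_reflect, of t] by (simp add: power2_commute)

lemma inverse_one_plus_Sp_le:
  assumes "0 \<le> t"
  shows "inverse (1 + Sp t) \<le> inverse (1 + Sp 0) + 4 * t"
proof (rule inverse_le_of_DERIV_ge[OF DERIV_one_plus_Sp one_plus_Sp_pos _ assms])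
  fix x
  have "3/2 * (N2 x - N3 x)\<^sup>2 * (1 + Sp x) \<le> 4 * (1 + Sp x) * (1 + Sp x)"
    using N2_minus_N3_sq_le[of x] one_plus_Sp_pos[of x] by (intro mult_right_mono) auto
  then show "- 4 * (1 + Sp x)\<^sup>2 \<le> - 3/2 * (N2 x - N3 x)\<^sup>2 * (1 + Sp x)"
    by (simp add: power2_eq_square algebra_simps)
qed

lemma neg_ln_one_plus_Sp_le:
  assumes "0 \<le> t"
  shows "- ln (1 + Sp t) \<le> ln (inverse (1 + Sp 0) + 4 * t)"
  using ln_mono[OF inverse_one_plus_Sp_le[OF assms]] one_plus_Sp_pos[of t]
  by (simp add: ln_inverse)

lemma ln_N2_minus_N3_le: "2 * ln (N2 t - N3 t) \<le> ln (8/3) + ln (1 + Sp t)"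
proof -
  have pos: "0 < N2 t - N3 t"
    using N2_pos[of t] N3_neg[of t] by simp
  then have "2 * ln (N2 t - N3 t) = ln ((N2 t - N3 t)\<^sup>2)"
    by (simp add: ln_realpow)
  also have "\<dots> \<le> ln (8/3 * (1 + Sp t))"
    using N2_minus_N3_sq_le[of t] pos by (intro ln_mono) auto
  also have "\<dots> = ln (8/3) + ln (1 + Sp t)"
    using one_plus_Sp_pos[of t] by (intro ln_mult_pos) auto
  finally show ?thesis .
qed

lemma ln_N2_plus_ln_neg_N3_le: "ln (N2 t) + ln (- N3 t) \<le> ln (2/3) + ln (1 + Sp t)"
proof -
  have pos: "0 < N2 t * - N3 t"
    using N2_pos[of t] N3_neg[of t] by (simp add: mult_pos_neg)
  have "ln (N2 t) + ln (- N3 t) = ln (N2 t * - N3 t)"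
    using N2_pos[of t] N3_neg[of t] by (intro ln_mult_pos[symmetric]) auto
  also have "\<dots> \<le> ln (2/3 * (1 + Sp t))"
    using N2_times_neg_N3_le[of t] pos by (rule ln_mono)
  also have "\<dots> = ln (2/3) + ln (1 + Sp t)"
    using one_plus_Sp_pos[of t] by (intro ln_mult_pos) auto
  finally show ?thesis .
qed

definition Z :: "real \<Rightarrow> real" where
  "Z t = ln (N2 t) + ln (- N3 t) - 3/2 * ln (1 + Sp t)"

lemma DERIV_Z: "(Z has_real_derivative 4 * (1 + Sp t) - 3/4 * (N2 t - N3 t)\<^sup>2) (at t)"
proof -
  have "(Z has_real_derivative
      (2 - 3/2 * (N2 t - N3 t)\<^sup>2 + 2 * Sp t + 2 * sqrt 3 * Sm t)
      + (2 - 3/2 * (N2 t - N3 t)\<^sup>2 + 2 * Sp t - 2 * sqrt 3 * Sm t)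
      - 3/2 * (- 3/2 * (N2 t - N3 t)\<^sup>2)) (at t)"
    unfolding Z_def[abs_def]
    by (intro DERIV_add DERIV_diff DERIV_cmult DERIV_ln_N2 DERIV_ln_neg_N3 DERIV_ln_one_plus_Sp)
  then show ?thesis
    by (rule DERIV_cong) (simp add: algebra_simps)
qed

lemma Z_increment_ge:
  assumes "0 \<le> t"
  shows "(ln (inverse (1 + Sp 0) + 4 * t) - ln (inverse (1 + Sp 0))) / 2 \<le> Z t - Z 0"
proof -
  define c where "c = inverse (1 + Sp 0)"
  have "(\<lambda>x. ln (c + 4 * x) / 2) t - (\<lambda>x. ln (c + 4 * x) / 2) 0 \<le> Z t - Z 0"
  proof (rule increment_le_of_DERIV_le[OF _ DERIV_Z _ assms])
    fix x :: real
    assume "x \<in> {0..t}"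
    then have le: "inverse (1 + Sp x) \<le> c + 4 * x"
      using inverse_one_plus_Sp_le unfolding c_def by simp
    have pos: "0 < c + 4 * x"
      using order.strict_trans2[OF _ le] one_plus_Sp_pos[of x] by simp
    have "((\<lambda>x. c + 4 * x) has_real_derivative 4) (at x)"
      by (auto intro!: derivative_eq_intros)
    from DERIV_cdivide[OF DERIV_chain2[OF DERIV_ln_divide[OF pos] this], of 2]
    show "((\<lambda>x. ln (c + 4 * x) / 2) has_real_derivative 2 * inverse (c + 4 * x)) (at x)"
      by (rule DERIV_cong) (use pos in \<open>simp add: field_simps\<close>)
    have "inverse (c + 4 * x) \<le> 1 + Sp x"
      using le_imp_inverse_le[OF le] one_plus_Sp_pos[of x] by simp
    then show "2 * inverse (c + 4 * x) \<le> 4 * (1 + Sp x) - 3/4 * (N2 x - N3 x)\<^sup>2"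
      using N2_minus_N3_sq_le[of x] by (smt (verit))
  qed
  then show ?thesis
    by (simp add: c_def diff_divide_distrib)
qed

lemma scale_factor_Sigma2_tendsto_0:
  "(scale_factor (\<lambda>s. (1/3) * Sp s + (1 / sqrt 3) * Sm s) \<longlongrightarrow> 0) at_top"
proof (rule scale_factor_tendsto_0)
  let ?G = "\<lambda>t. (ln (N2 t) - ln (1 + Sp t)) / 2"
  fix t
  have "(?G has_real_derivative
      ((2 - 3/2 * (N2 t - N3 t)\<^sup>2 + 2 * Sp t + 2 * sqrt 3 * Sm t)
      - (- 3/2 * (N2 t - N3 t)\<^sup>2)) / 2) (at t)"
    by (intro DERIV_cdivide DERIV_diff DERIV_ln_N2 DERIV_ln_one_plus_Sp)
  then show "(?G has_real_derivative 3 * ((1/3) * Sp t + (1 / sqrt 3) * Sm t) + 1) (at t)"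
    by (rule DERIV_cong) (simp add: field_simps)
next
  define c where "c = inverse (1 + Sp 0)"
  define a where "a = Z 0 - ln c / 2 - ln (8/3) / 2"
  have "0 < c"
    using one_plus_Sp_pos[of 0] by (simp add: c_def)
  then have "filterlim (\<lambda>t. (a + ln (c + 4 * t) / 2) / 2) at_top at_top"
    by real_asymp
  moreover have "\<forall>\<^sub>F t in at_top. (a + ln (c + 4 * t) / 2) / 2 \<le> (ln (N2 t) - ln (1 + Sp t)) / 2"
    using eventually_ge_at_top[of 0]
  proof eventually_elim
    case (elim t)
    have "ln (- N3 t) \<le> ln (N2 t - N3 t)"
      using N2_pos[of t] N3_neg[of t] by simp
    then show ?case
      using Z_increment_ge[OF elim] ln_N2_minus_N3_le[of t] unfolding Z_def a_def c_def by simp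
  qed
  ultimately show "filterlim (\<lambda>t. (ln (N2 t) - ln (1 + Sp t)) / 2) at_top at_top"
    by (rule filterlim_at_top_mono)
qed

lemma scale_factor_Sigma3_tendsto_0:
  "(scale_factor (\<lambda>s. (1/3) * Sp s - (1 / sqrt 3) * Sm s) \<longlongrightarrow> 0) at_top"
  using bianchi_VI0.scale_factor_Sigma2_tendsto_0[OF bianchi_VI0_reflect] by simp

lemma scale_factor_Sigma1_tendsto_0: "(scale_factor (\<lambda>s. - (2/3) * Sp s) \<longlongrightarrow> 0) at_top"
proof (rule scale_factor_tendsto_0)
  let ?G = "\<lambda>t. 3 * t - (ln (N2 t) + ln (- N3 t)) / 2 + ln (1 + Sp t)"
  fix t
  have "(?G has_real_derivative 3 * 1
      - ((2 - 3/2 * (N2 t - N3 t)\<^sup>2 + 2 * Sp t + 2 * sqrt 3 * Sm t)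
        + (2 - 3/2 * (N2 t - N3 t)\<^sup>2 + 2 * Sp t - 2 * sqrt 3 * Sm t)) / 2
      + - 3/2 * (N2 t - N3 t)\<^sup>2) (at t)"
    by (intro DERIV_add DERIV_diff DERIV_cdivide DERIV_cmult DERIV_ident
        DERIV_ln_N2 DERIV_ln_neg_N3 DERIV_ln_one_plus_Sp)
  then show "(?G has_real_derivative 3 * (- (2/3) * Sp t) + 1) (at t)"
    by (rule DERIV_cong) (simp add: field_simps)
next
  define c where "c = inverse (1 + Sp 0)"
  have "0 < c"
    using one_plus_Sp_pos[of 0] by (simp add: c_def)
  then have "filterlim (\<lambda>t. 3 * t - ln (2/3) / 2 - ln (c + 4 * t) / 2) at_top at_top"
    by real_asymp
  moreover have "\<forall>\<^sub>F t in at_top. 3 * t - ln (2/3) / 2 - ln (c + 4 * t) / 2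
      \<le> 3 * t - (ln (N2 t) + ln (- N3 t)) / 2 + ln (1 + Sp t)"
    using eventually_ge_at_top[of 0]
  proof eventually_elim
    case (elim t)
    show ?case
      using ln_N2_plus_ln_neg_N3_le[of t] neg_ln_one_plus_Sp_le[OF elim] unfolding c_def
      by (simp add: field_simps)
  qed
  ultimately show "filterlim (\<lambda>t. 3 * t - (ln (N2 t) + ln (- N3 t)) / 2 + ln (1 + Sp t)) at_top at_top"
    by (rule filterlim_at_top_mono)
qed

end

theorem mainTheorem18:
  fixes N1 N2 N3 Sp Sm :: "real \<Rightarrow> real"
  assumes sol: "WH_solution N1 N2 N3 Sp Sm"
    and N1z: "\<forall>t. N1 t = 0"
    and N2p: "\<forall>t. N2 t > 0"
    and N3n: "\<forall>t. N3 t < 0"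
  defines "S1 \<equiv> (\<lambda>s. - (2/3) * Sp s)"
    and "S2 \<equiv> (\<lambda>s. (1/3) * Sp s + (1 / sqrt 3) * Sm s)"
    and "S3 \<equiv> (\<lambda>s. (1/3) * Sp s - (1 / sqrt 3) * Sm s)"
  shows "(scale_factor S1 \<longlongrightarrow> 0) at_top \<and>
         (scale_factor S2 \<longlongrightarrow> 0) at_top \<and>
         (scale_factor S3 \<longlongrightarrow> 0) at_top"
proof -
  interpret bianchi_VI0 N1 N2 N3 Sp Sm
    using sol N1z N2p N3n by unfold_locales auto
  show ?thesis
    unfolding S1_def S2_def S3_def
    using scale_factor_Sigma1_tendsto_0 scale_factor_Sigma2_tendsto_0 scale_factor_Sigma3_tendsto_0
    by blast
qed

end
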